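(* For $n\ge 3$, \begin{align*} (\underbrace{\mathfrak C_0+\cdots+\mathfrak C_0}_{7})^n&=\binom{2n-1}{6}\mathfrak C_{2n}+\frac{12n^2-60n+83}{15}\binom{2n}{2}\binom{2n-3}{4}\mathfrak C_{2n-2}\\ &\quad+\frac{(4n^2-24n+39)(12n^2-72n+109)}{15}\binom{2n}{4}\binom{2n-5}{2}\mathfrak C_{2n-4}+\binom{2n}{6}(2n-7)^6\mathfrak C_{2n-6}. \end{align*}
   Context: The numbers $\mathfrak C_{2n}$ (Cauchy numbers with level $2$) are defined by $\frac{t}{{\rm arcsinh}\,t}=\sum_{n=0}^\infty\mathfrak C_{2n}\frac{t^{2n}}{(2n)!}$. Convolution notation: $(\mathfrak C_{2j_1}+\cdots+\mathfrak C_{2j_k})^n:=\sum_{i_1+\cdots+i_k=n,\ i_1,\dots,i_k\ge0}\frac{(2n)!}{(2i_1)!\cdots(2i_k)!}\mathfrak C_{2i_1+2j_1}\cdots\mathfrak C_{2i_k+2j_k}$ (here with $k=7$ summands, all $j_i=0$). *)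

theory Defs
  imports "HOL-Computational_Algebra.Formal_Power_Series"
begin

(* Maclaurin series of arcsinh: integral of (1 + X^2)^(-1/2) with constant term 0 *)
definition arcsinh_fps :: "real fps" where
  "arcsinh_fps = fps_integral ((fps_binomial (-1/2)) oo (fps_X ^ 2)) 0"

(* exponential generating function t / arcsinh t = inverse (arcsinh t / t) *)
definition cauchy2_egf :: "real fps" where
  "cauchy2_egf = inverse (fps_shift 1 arcsinh_fps)"

(* Cauchy numbers with level 2: \<CC>_{2n} = (2n)! [t^{2n}] t/arcsinh t ;
   argument m is the full index 2n *)
definition cauchy2 :: "nat \<Rightarrow> real" where
  "cauchy2 m = fact m * fps_nth cauchy2_egf m"

(* (\<CC>_{2j_1}+...+\<CC>_{2j_k})^n with all j_i = 0, k = number of summands: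
   sum over (i_1,...,i_k) with i_1+...+i_k = n of
   (2n)!/((2i_1)!...(2i_k)!) * \<CC>_{2i_1} ... \<CC>_{2i_k} *)
definition cauchy2_conv :: "nat \<Rightarrow> nat \<Rightarrow> real" where
  "cauchy2_conv k n =
     (\<Sum>is\<in>{is::nat list. length is = k \<and> sum_list is = n}.
        fact (2*n) / (\<Prod>i\<leftarrow>is. fact (2*i)) * (\<Prod>i\<leftarrow>is. cauchy2 (2*i)))"

end

(*
  Let f = t / arcsinh t, B = arcsinh' = (1 + t^2)^(-1/2), and let theta_k = t d/dt - k (fps_euler k) be the
  shifted Euler operator, which multiplies the coefficient of t^m by m - k. From f * (arcsinh t / t) = 1
  one gets theta_1 f = -B f^2, hence theta_k (f^k) = -k B f^(k+1); applying theta_(k+1) once more and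
  using (1 + t^2) B' = -t B and (1 + t^2) B^2 = 1 gives

    t^2 theta_k (f^k) + (1 + t^2) theta_(k+1) (theta_k (f^k)) = k (k+1) f^(k+2).

  Comparing coefficients of t^m expresses [t^m] f^(k+2) through [t^m] f^k and [t^(m-2)] f^k.
  Three steps (k = 1, 3, 5) write [t^m] f^7 in terms of the coefficients of f in degrees m, m-2,
  m-4, m-6. Since f is even, the 7-fold convolution of Cauchy numbers is (2n)! [t^(2n)] f^7.
*)
theory Submission
  imports Defs
begin

unbundle fps_syntax

lemma fps_compose_X2_nth:
  "(F oo fps_X ^ 2) $ m = (if even m then F $ (m div 2) else (0::'a::comm_ring_1))"
proof -
  have "(F oo fps_X ^ 2) $ m = (\<Sum>i=0..m. if i = m div 2 \<and> even m then F $ i else 0)"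
    unfolding fps_compose_nth power_mult[symmetric] fps_X_power_nth
    by (intro sum.cong) auto
  then show ?thesis
    by simp
qed

lemma fps_eq_compose_X2_if_odd_nth_eq_0:
  assumes "\<And>k. F $ Suc (2 * k) = (0::'a::comm_ring_1)"
  shows "F = Abs_fps (\<lambda>k. F $ (2 * k)) oo fps_X ^ 2"
  using assms by (intro fps_ext) (auto simp: fps_compose_X2_nth elim!: oddE)

lemma fps_power_nth_eq_sum_lists:
  fixes A :: "'a::comm_ring_1 fps"
  shows "(A ^ k) $ n = (\<Sum>is\<in>{is. length is = k \<and> sum_list is = n}. \<Prod>i\<leftarrow>is. A $ i)"
proof (cases k)
  case 0
  then have "{is. length is = k \<and> sum_list is = n} = (if n = 0 then {[]} else {})"
    by auto
  with 0 show ?thesis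
    by simp
next
  case (Suc m)
  have "(A ^ Suc m) $ n = (\<Sum>v\<in>natpermute n (m + 1). \<Prod>j=0..m. A $ (v ! j))"
    by (rule fps_power_nth_Suc)
  also have "\<dots> = (\<Sum>is\<in>{is. length is = Suc m \<and> sum_list is = n}. \<Prod>i\<leftarrow>is. A $ i)"
    unfolding natpermute_def
    by (intro sum.cong) (auto simp: prod.list_conv_set_nth atLeastLessThanSuc_atLeastAtMost)
  finally show ?thesis
    using Suc by simp
qed

definition fps_euler :: "nat \<Rightarrow> 'a::comm_ring_1 fps \<Rightarrow> 'a fps" where
  "fps_euler k V = fps_X * fps_deriv V - of_nat k * V"

lemma fps_euler_nth: "fps_euler k V $ m = (of_nat m - of_nat k) * V $ m"
  by (cases m) (simp_all add: fps_euler_def algebra_simps)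

lemma fps_euler_mult: "fps_euler k (A * V) = fps_X * fps_deriv A * V + A * fps_euler k V"
  by (simp add: fps_euler_def algebra_simps)

lemma fps_euler_second_order_nth:
  fixes V :: "'a::comm_ring_1 fps"
  assumes "2 \<le> m"
  shows "(fps_X ^ 2 * fps_euler k V + (1 + fps_X ^ 2) * fps_euler (Suc k) (fps_euler k V)) $ m
    = (of_nat m - of_nat k) * (of_nat m - of_nat k - 1) * V $ m
      + (of_nat m - of_nat k - 2) ^ 2 * V $ (m - 2)"
proof -
  obtain j where m: "m = j + 2"
    using le_Suc_ex[OF assms] by (auto simp: add.commute)
  have "(fps_X ^ 2 * W) $ (j + 2) = W $ j" for W :: "'a fps"
    by (simp add: fps_X_power_mult_nth)
  then have "(fps_X ^ 2 * fps_euler k V + (1 + fps_X ^ 2) * fps_euler (Suc k) (fps_euler k V)) $ (j + 2)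
    = fps_euler k V $ j + fps_euler (Suc k) (fps_euler k V) $ (j + 2) + fps_euler (Suc k) (fps_euler k V) $ j"
    by (simp add: distrib_right)
  then show ?thesis
    unfolding m fps_euler_nth by (simp add: power2_eq_square algebra_simps)
qed

lemma fps_deriv_arcsinh_fps: "fps_deriv arcsinh_fps = fps_binomial (- 1 / 2) oo fps_X ^ 2"
  by (simp add: arcsinh_fps_def fps_deriv_fps_integral)

lemma arcsinh_fps_eq_X_mult_shift: "arcsinh_fps = fps_X * fps_shift 1 arcsinh_fps"
  by (rule fps_ext) (simp add: arcsinh_fps_def)

lemma nth_0_fps_deriv_arcsinh_fps: "fps_deriv arcsinh_fps $ 0 = 1"
  by (simp add: fps_deriv_arcsinh_fps)

lemma fps_deriv_arcsinh_fps_squared: "(1 + fps_X ^ 2) * fps_deriv arcsinh_fps ^ 2 = 1"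
proof -
  have "fps_binomial (- 1 / 2) ^ 2 = fps_binomial (- 1 :: real)"
    by (simp add: power2_eq_square fps_binomial_add_mult[symmetric])
  then have "(1 + fps_X) * fps_binomial (- 1 / 2) ^ 2 = (1 :: real fps)"
    by (simp add: fps_binomial_1[symmetric] fps_binomial_add_mult[symmetric])
  then have "((1 + fps_X) * fps_binomial (- 1 / 2) ^ 2) oo fps_X ^ 2 = (1 :: real fps)"
    by simp
  then show ?thesis
    by (simp add: fps_deriv_arcsinh_fps fps_compose_mult_distrib fps_compose_power fps_compose_add_distrib)
qed

lemma arcsinh_fps_ode:
  "(1 + fps_X ^ 2) * fps_deriv (fps_deriv arcsinh_fps) = - fps_X * fps_deriv arcsinh_fps"
proof -
  let ?B = "fps_deriv arcsinh_fps"
  have "fps_deriv ((1 + fps_X ^ 2) * ?B ^ 2) = 0"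
    by (simp only: fps_deriv_arcsinh_fps_squared fps_deriv_1)
  then have "2 * ?B * ((1 + fps_X ^ 2) * fps_deriv ?B + fps_X * ?B) = 0"
    by (simp add: fps_deriv_power power2_eq_square algebra_simps)
  moreover have "?B \<noteq> 0"
    using nth_0_fps_deriv_arcsinh_fps by (metis fps_zero_nth zero_neq_one)
  ultimately show ?thesis
    by (simp add: eq_neg_iff_add_eq_0)
qed

lemma cauchy2_egf_euler: "fps_euler 1 cauchy2_egf = - fps_deriv arcsinh_fps * cauchy2_egf ^ 2"
proof -
  let ?G = "fps_shift 1 arcsinh_fps"
  have "?G $ 0 = 1"
    using nth_0_fps_deriv_arcsinh_fps by (simp add: arcsinh_fps_def)
  then have inverse: "cauchy2_egf * ?G = 1"
    by (simp add: cauchy2_egf_def inverse_mult_eq_1)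
  then have "fps_deriv (cauchy2_egf * ?G) = 0"
    by simp
  then have "cauchy2_egf * fps_deriv ?G + fps_deriv cauchy2_egf * ?G = 0"
    by simp
  moreover have "?G + fps_X * fps_deriv ?G = fps_deriv arcsinh_fps"
    using arg_cong[OF arcsinh_fps_eq_X_mult_shift, of fps_deriv] by (simp add: add.commute)
  ultimately show ?thesis
    using inverse unfolding fps_euler_def of_nat_1 by algebra
qed

lemma cauchy2_egf_power_euler:
  "fps_euler k (cauchy2_egf ^ k)
    = - of_nat k * fps_deriv arcsinh_fps * cauchy2_egf ^ Suc k"
proof (cases k)
  case 0
  then show ?thesis
    by (simp add: fps_euler_def)
next
  case (Suc j)
  have "fps_euler k (cauchy2_egf ^ k) = of_nat k * cauchy2_egf ^ j * fps_euler 1 cauchy2_egf"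
    unfolding fps_euler_def fps_deriv_power' Suc by (simp add: algebra_simps)
  then show ?thesis
    unfolding cauchy2_egf_euler Suc by (simp add: power2_eq_square algebra_simps)
qed

lemma cauchy2_egf_power_ode:
  "fps_X ^ 2 * fps_euler k (cauchy2_egf ^ k)
     + (1 + fps_X ^ 2) * fps_euler (Suc k) (fps_euler k (cauchy2_egf ^ k))
   = of_nat (k * Suc k) * cauchy2_egf ^ (k + 2)"
proof -
  let ?B = "fps_deriv arcsinh_fps" and ?f = cauchy2_egf
  define g where "g = ?f ^ Suc k"
  have power: "?f ^ (k + 2) = ?f * g"
    by (simp add: g_def)
  have "fps_euler (Suc k) (fps_euler k (?f ^ k))
    = - of_nat k * (fps_X * fps_deriv ?B * g - of_nat (Suc k) * ?B ^ 2 * (?f * g))"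
    unfolding cauchy2_egf_power_euler[of k] fps_euler_mult cauchy2_egf_power_euler[of "Suc k"] g_def
    by (simp add: power2_eq_square algebra_simps)
  then show ?thesis
    using fps_deriv_arcsinh_fps_squared arcsinh_fps_ode
    unfolding cauchy2_egf_power_euler[of k] power g_def[symmetric] of_nat_mult of_nat_Suc
    by algebra
qed

lemma cauchy2_egf_power_nth_recurrence:
  assumes "1 \<le> k" and "2 \<le> m"
  shows "(cauchy2_egf ^ (k + 2)) $ m
    = ((real m - k) * (real m - k - 1) * (cauchy2_egf ^ k) $ m
        + (real m - k - 2) ^ 2 * (cauchy2_egf ^ k) $ (m - 2)) / (k * (k + 1))"
proof -
  have "real (k * Suc k) * (cauchy2_egf ^ (k + 2)) $ m
    = (real m - k) * (real m - k - 1) * (cauchy2_egf ^ k) $ m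
        + (real m - k - 2) ^ 2 * (cauchy2_egf ^ k) $ (m - 2)"
    using arg_cong[OF cauchy2_egf_power_ode, of "\<lambda>F. F $ m"]
    unfolding fps_euler_second_order_nth[OF assms(2)] by (simp add: fps_of_nat[symmetric])
  moreover have "real (k * Suc k) = k * (k + 1)"
    by simp
  ultimately show ?thesis
    using assms(1) by (simp add: eq_divide_eq ac_simps del: of_nat_mult of_nat_Suc power_Suc)
qed

lemma cauchy2_egf_power7_nth:
  assumes "6 \<le> m"
  shows "720 * (cauchy2_egf ^ 7) $ m
    = (real m - 1) * (real m - 2) * (real m - 3) * (real m - 4) * (real m - 5) * (real m - 6)
        * cauchy2_egf $ m
      + (real m - 3) * (real m - 4) * (real m - 5) * (real m - 6)
        * ((real m - 3) ^ 2 + (real m - 5) ^ 2 + (real m - 7) ^ 2) * cauchy2_egf $ (m - 2)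
      + (real m - 5) * (real m - 6)
        * ((real m - 5) ^ 4 + (real m - 5) ^ 2 * (real m - 7) ^ 2 + (real m - 7) ^ 4)
        * cauchy2_egf $ (m - 4)
      + (real m - 7) ^ 6 * cauchy2_egf $ (m - 6)"
proof -
  obtain j where m: "m = j + 6"
    using le_Suc_ex[OF assms] by (auto simp: add.commute)
  let ?f = cauchy2_egf and ?x = "real j"
  have step: "(?f ^ K) $ (j + i) = ((real (j + i) - k) * (real (j + i) - k - 1) * (?f ^ k) $ (j + i)
      + (real (j + i) - k - 2) ^ 2 * (?f ^ k) $ (j + l)) / (k * (k + 1))"
    if "1 \<le> k" "K = k + 2" "i = l + 2" for k K i l
    \<comment> \<open>exponent and indices are separate parameters so that the instances below keep
      literal numerals, which the simplifier normalises consistently\<close>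
    using cauchy2_egf_power_nth_recurrence[OF that(1), of "j + i"] that(2,3) by simp
  have "(?f ^ 3) $ (j + 6) = ((?x + 5) * (?x + 4) * ?f $ (j + 6) + (?x + 3) ^ 2 * ?f $ (j + 4)) / 2"
    "(?f ^ 3) $ (j + 4) = ((?x + 3) * (?x + 2) * ?f $ (j + 4) + (?x + 1) ^ 2 * ?f $ (j + 2)) / 2"
    "(?f ^ 3) $ (j + 2) = ((?x + 1) * ?x * ?f $ (j + 2) + (?x - 1) ^ 2 * ?f $ j) / 2"
    "(?f ^ 5) $ (j + 6) = ((?x + 3) * (?x + 2) * (?f ^ 3) $ (j + 6) + (?x + 1) ^ 2 * (?f ^ 3) $ (j + 4)) / 12"
    "(?f ^ 5) $ (j + 4) = ((?x + 1) * ?x * (?f ^ 3) $ (j + 4) + (?x - 1) ^ 2 * (?f ^ 3) $ (j + 2)) / 12"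
    "(?f ^ 7) $ (j + 6) = ((?x + 1) * ?x * (?f ^ 5) $ (j + 6) + (?x - 1) ^ 2 * (?f ^ 5) $ (j + 4)) / 30"
    using step[of 1 3 6 4] step[of 1 3 4 2] step[of 1 3 2 0] step[of 3 5 6 4] step[of 3 5 4 2]
      step[of 5 7 6 4]
    by (simp_all add: algebra_simps)
  then show ?thesis
    unfolding m by simp (simp add: field_simps; algebra)
qed

lemma cauchy2_egf_eq_compose_X2: "cauchy2_egf = Abs_fps (\<lambda>k. cauchy2_egf $ (2 * k)) oo fps_X ^ 2"
proof -
  let ?G = "fps_shift 1 arcsinh_fps"
  let ?K = "Abs_fps (\<lambda>k. ?G $ (2 * k))"
  have "?G $ Suc (2 * k) = 0" for k
    using arg_cong[OF fps_deriv_arcsinh_fps, of "\<lambda>F. F $ Suc (2 * k)"]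
    by (simp add: arcsinh_fps_def fps_compose_X2_nth)
  then have "cauchy2_egf = inverse (?K oo fps_X ^ 2)"
    unfolding cauchy2_egf_def by (subst fps_eq_compose_X2_if_odd_nth_eq_0) auto
  also have "\<dots> = inverse ?K oo fps_X ^ 2"
    using nth_0_fps_deriv_arcsinh_fps by (simp add: arcsinh_fps_def fps_inverse_compose)
  finally have f: "cauchy2_egf = inverse ?K oo fps_X ^ 2" .
  have "Abs_fps (\<lambda>k. (inverse ?K oo fps_X ^ 2) $ (2 * k)) = inverse ?K"
    by (simp add: fps_compose_X2_nth fps_eq_iff)
  then show ?thesis
    by (subst (1 2) f) simp
qed

lemma cauchy2_conv_eq_nth_power:
  "cauchy2_conv k n = fact (2 * n) * (cauchy2_egf ^ k) $ (2 * n)"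
proof -
  let ?E = "Abs_fps (\<lambda>i. cauchy2_egf $ (2 * i))"
  have prod_list_divide: "(\<Prod>i\<leftarrow>is. a i / b i) = (\<Prod>i\<leftarrow>is. a i) / (\<Prod>i\<leftarrow>is. b i)"
    for "is" :: "nat list" and a b :: "nat \<Rightarrow> real"
    by (induct "is") simp_all
  have "(cauchy2_egf ^ k) $ (2 * n) = (?E ^ k) $ n"
    by (subst (1) cauchy2_egf_eq_compose_X2) (simp add: fps_compose_power fps_compose_X2_nth)
  also have "\<dots> = (\<Sum>is\<in>{is. length is = k \<and> sum_list is = n}.
      (\<Prod>i\<leftarrow>is. cauchy2 (2 * i)) / (\<Prod>i\<leftarrow>is. fact (2 * i)))"
    by (simp add: fps_power_nth_eq_sum_lists cauchy2_def prod_list_divide[symmetric])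
  finally show ?thesis
    by (simp add: cauchy2_conv_def sum_distrib_left)
qed

theorem mainTheorem9:
  fixes n :: nat
  assumes "n \<ge> 3"
  shows "cauchy2_conv 7 n =
      real ((2*n - 1) choose 6) * cauchy2 (2*n)
    + (12 * real n ^ 2 - 60 * real n + 83) / 15 * real ((2*n) choose 2) * real ((2*n - 3) choose 4)
        * cauchy2 (2*n - 2)
    + (4 * real n ^ 2 - 24 * real n + 39) * (12 * real n ^ 2 - 72 * real n + 109) / 15
        * real ((2*n) choose 4) * real ((2*n - 5) choose 2) * cauchy2 (2*n - 4)
    + real ((2*n) choose 6) * (2 * real n - 7) ^ 6 * cauchy2 (2*n - 6)"
proof -
  obtain j where n: "n = j + 3"
    using le_Suc_ex[OF assms] by (auto simp: add.commute)
  let ?x = "real j"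
  have index: "2 * n = 2 * j + 6" "2 * n - 1 = 2 * j + 5" "2 * n - 2 = 2 * j + 4" "2 * n - 3 = 2 * j + 3"
    "2 * n - 4 = 2 * j + 2" "2 * n - 5 = 2 * j + 1" "2 * n - 6 = 2 * j"
    using n by simp_all
  have binomial: "real (a choose k) = (\<Prod>i=0..<k. real a - real i) / fact k" for a k
    by (simp add: binomial_gbinomial gbinomial_prod_rev)
  have fact: "fact (2 * j + 6) = (2 * ?x + 6) * (2 * ?x + 5) * fact (2 * j + 4)"
    "fact (2 * j + 4) = (2 * ?x + 4) * (2 * ?x + 3) * fact (2 * j + 2)"
    "fact (2 * j + 2) = (2 * ?x + 2) * (2 * ?x + 1) * (fact (2 * j) :: real)"
    by (simp_all add: numeral_eq_Suc algebra_simps)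
  show ?thesis
    using cauchy2_egf_power7_nth[of "2 * j + 6"]
    unfolding cauchy2_conv_eq_nth_power cauchy2_def index binomial
    by (simp add: n fact numeral_eq_Suc prod.atLeast0_lessThan_Suc) (simp add: field_simps; algebra)
qed

end
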